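(* Let $k\geq 0$, let $t_f>0$, and let $E_h$ be a given (piecewise polynomial) approximation of the electrostatic field on $\Omega_x$, with restriction $E_h^i$ to each cell $I_i$. Let $f_h\in\mathcal{C}^1([0,t_f];\mathcal{Z}_h^k)$ satisfy $f_h(0)=\mathcal{P}_h(f_0)$ and $$\sum_{i=1}^{N_x}\sum_{j=1}^{N_v}\mathcal{B}_{ij}(E_h;f_h,\varphi_h)=0\qquad\forall\,\varphi_h\in\mathcal{Z}_h^k,\ \forall t\in[0,t_f],$$ where $$\mathcal{B}_{ij}(E_h;f_h,\varphi_h)=\int_{K_{ij}}\frac{\partial f_h}{\partial t}\varphi_h\,dv\,dx-\int_{K_{ij}}v f_h\frac{\partial\varphi_h}{\partial x}\,dv\,dx+\int_{K_{ij}}E_h^if_h\frac{\partial\varphi_h}{\partial v}\,dv\,dx$$ $$+\int_{J_j}\Big[(\widehat{vf_h}\,\varphi_h^-)_{i+1/2,v}-(\widehat{vf_h}\,\varphi_h^+)_{i-1/2,v}\Big]dv-\int_{I_i}\Big[(\widehat{E_h^if_h}\,\varphi_h^-)_{x,j+1/2}-(\widehat{E_h^if_h}\,\varphi_h^+)_{x,j-1/2}\Big]dx,$$ with the numerical flux $\widehat{vf_h}=\{vf_h\}-\frac{|v|}{2}[f_h]$ (i.e. $vf_h^-$ if $v\ge0$, $vf_h^+$ if $v<0$) and with $\widehat{E_h^if_h}$ given by any one of the following three choices: (A) $\widehat{E_h^if_h}=E_h^if_h^+$ if $P^0(E_h^i)\ge 0$ and $E_h^if_h^-$ if $P^0(E_h^i)<0$;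 (B) $\widehat{E_h^if_h}=E_h^if_h^+$ if $E_h^i>0$ on $I_i$, $E_h^if_h^-$ if $E_h^i<0$ on $I_i$, and $\omega^+E_h^if_h^++\omega^-E_h^if_h^-$ if $E_h^i(x^* )=0$ for some $x^*\in I_i$, where $\omega^+=\frac{|\max_{I_i}E_h|}{|\max_{I_i}E_h|+|\min_{I_i}E_h|}$, $\omega^-=\frac{|\min_{I_i}E_h|}{|\max_{I_i}E_h|+|\min_{I_i}E_h|}$; (C) $\widehat{E_h^if_h}=E_h^if_h^+$ if $E_h^i>0$ on $I_i$, $E_h^if_h^-$ if $E_h^i<0$ on $I_i$, $P^0(E_h^i)f_h^+$ if $P^0(E_h^i)>0$ and $E_h^i$ vanishes somewhere in $I_i$, and $P^0(E_h^i)f_h^-$ if $P^0(E_h^i)<0$ and $E_h^i$ vanishes somewhere in $I_i$; and with boundary fluxes $(\widehat{vf_h})_{1/2,v}=(\widehat{vf_h})_{N_x+1/2,v}$ (periodicity in $x$) and $(\widehat{E_h^if_h})_{x,1/2}=(\widehat{E_h^if_h})_{x,N_v+1/2}=0$. Then for all $t\in[0,t_f]$, $$\sum_{i,j}\int_{K_{ij}}f_h(t)\,dv\,dx=\sum_{i,j}\int_{K_{ij}}f_h(0)\,dv\,dx=\sum_{i,j}\int_{K_{ij}}f_0\,dv\,dx=1.$$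
   Context: Setting: one-dimensional Vlasov–Poisson system on the phase space $\Omega=\Omega_x\times\Omega_v$, $\Omega_x=[0,1]$ (periodic in $x$), $\Omega_v=[-L,L]$. The initial distribution $f_0$ is supported in $\Omega$ and satisfies the charge-neutrality normalization $\int_0^1\int_{\Omega_v}f_0\,dv\,dx=1$. The mesh $\mathcal{T}_h=\{K_{ij}=I_i\times J_j\}$ is a regular Cartesian partition with $I_i=[x_{i-1/2},x_{i+1/2}]$, $i=1,\dots,N_x$, of $\Omega_x$ and $J_j=[v_{j-1/2},v_{j+1/2}]$, $j=1,\dots,N_v$, of $\Omega_v$, with $v=0$ a node of the $v$-partition. $\mathcal{Z}_h^k$ is the space of $L^2(\Omega)$ functions whose restriction to each $K_{ij}$ is a polynomial of degree at most $k$ in each variable. $\mathcal{P}_h$ is the $L^2(\Omega)$-orthogonal projection onto $\mathcal{Z}_h^k$, and $P^0(w)$ on $I_i$ denotes the $L^2(I_i)$-projection onto constants (the cell average). Traces: $(\varphi)^\pm_{i+1/2,v}=\lim_{\varepsilon\downarrow0}\varphi(x_{i+1/2}\pm\varepsilon,v)$ and $(\varphi)^\pm_{x,j+1/2}=\lim_{\varepsilon\downarrow0}\varphi(x,v_{j+1/2}\pm\varepsilon)$; jump $[\varphi]=\varphi^+-\varphi^-$ and average $\{\varphi\}=\frac12(\varphi^++\varphi^-)$. *)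

theory Defs
  imports "HOL-Analysis.Analysis"
begin

(* Coefficient arrays: c i j a b is the coefficient of x^a v^b of the restriction
   to the cell K_ij of an element of Z_h^k (only 1<=i<=Nx, 1<=j<=Nv, a,b<=k matter). *)
type_synonym coef = "nat \<Rightarrow> nat \<Rightarrow> nat \<Rightarrow> nat \<Rightarrow> real"

definition cellpoly :: "nat \<Rightarrow> coef \<Rightarrow> nat \<Rightarrow> nat \<Rightarrow> real \<Rightarrow> real \<Rightarrow> real" where
  "cellpoly k c i j x v = (\<Sum>a\<le>k. \<Sum>b\<le>k. c i j a b * x ^ a * v ^ b)"

(* the cell K_ij = I_i x J_j, with x_{i-1/2} = xs (i-1), x_{i+1/2} = xs i, v_{j-1/2} = vs (j-1), v_{j+1/2} = vs j *)
definition cell :: "(nat \<Rightarrow> real) \<Rightarrow> (nat \<Rightarrow> real) \<Rightarrow> nat \<Rightarrow> nat \<Rightarrow> (real \<times> real) set" where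
  "cell xs vs i j = cbox (xs (i - 1), vs (j - 1)) (xs i, vs j)"

definition cell_avg :: "(nat \<Rightarrow> real) \<Rightarrow> (real \<Rightarrow> real) \<Rightarrow> nat \<Rightarrow> real" where
  "cell_avg xs E i = integral {xs (i - 1)..xs i} E / (xs i - xs (i - 1))"

definition mass :: "nat \<Rightarrow> nat \<Rightarrow> (nat \<Rightarrow> real) \<Rightarrow> (nat \<Rightarrow> real) \<Rightarrow> nat \<Rightarrow> coef \<Rightarrow> real" where
  "mass Nx Nv xs vs k c =
     (\<Sum>i=1..Nx. \<Sum>j=1..Nv. integral (cell xs vs i j) (\<lambda>(x, v). cellpoly k c i j x v))"

(* L^2(Omega)-orthogonal projection onto Z_h^k: p = P_h(g) iff (g - p) is orthogonal to Z_h^k *)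
definition is_L2_proj :: "nat \<Rightarrow> nat \<Rightarrow> (nat \<Rightarrow> real) \<Rightarrow> (nat \<Rightarrow> real) \<Rightarrow> nat
     \<Rightarrow> (real \<times> real \<Rightarrow> real) \<Rightarrow> coef \<Rightarrow> bool" where
  "is_L2_proj Nx Nv xs vs k g p \<longleftrightarrow>
     (\<forall>\<phi>::coef. (\<Sum>i=1..Nx. \<Sum>j=1..Nv.
        integral (cell xs vs i j) (\<lambda>(x, v). (g (x, v) - cellpoly k p i j x v) * cellpoly k \<phi> i j x v)) = 0)"

(* upwind flux hat(v f_h) at the x-edge x_{e+1/2} (e = 0..Nx), v in J_j; periodic: edge 0 = edge Nx.
   f^- comes from the cell to the left, f^+ from the cell to the right. *)
definition vflux :: "nat \<Rightarrow> nat \<Rightarrow> (nat \<Rightarrow> real) \<Rightarrow> coef \<Rightarrow> nat \<Rightarrow> nat \<Rightarrow> real \<Rightarrow> real" where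
  "vflux k Nx xs c e j v =
     (let e' = (if e = 0 then Nx else e);
          r = (if e' = Nx then 1 else e' + 1);
          fm = cellpoly k c e' j (xs e') v;
          fp = cellpoly k c r j (xs (r - 1)) v
      in (v * fp + v * fm) / 2 - \<bar>v\<bar> / 2 * (fp - fm))"

datatype eflux_choice = ChoiceA | ChoiceB | ChoiceC

(* flux hat(E_h^i f_h) at the v-edge v_{j+1/2} (j = 0..Nv), x in I_i; zero at j = 0 and j = Nv.
   E is the restriction E_h^i of E_h to I_i. *)
definition Eflux :: "eflux_choice \<Rightarrow> nat \<Rightarrow> nat \<Rightarrow> (nat \<Rightarrow> real) \<Rightarrow> (nat \<Rightarrow> real)
      \<Rightarrow> (real \<Rightarrow> real) \<Rightarrow> coef \<Rightarrow> nat \<Rightarrow> nat \<Rightarrow> real \<Rightarrow> real" where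
  "Eflux ch k Nv xs vs E c i j x =
     (if j = 0 \<or> Nv \<le> j then 0 else
      (let fm = cellpoly k c i j x (vs j);
           fp = cellpoly k c i (j + 1) x (vs j);
           I = {xs (i - 1)..xs i};
           P = cell_avg xs E i
       in case ch of
         ChoiceA \<Rightarrow> (if P \<ge> 0 then E x * fp else E x * fm)
       | ChoiceB \<Rightarrow>
           (if (\<forall>y\<in>I. E y > 0) then E x * fp
            else if (\<forall>y\<in>I. E y < 0) then E x * fm
            else if (\<exists>y\<in>I. E y = 0) then
              (let M = Sup (E ` I); m = Inf (E ` I);
                   wp = \<bar>M\<bar> / (\<bar>M\<bar> + \<bar>m\<bar>); wm = \<bar>m\<bar> / (\<bar>M\<bar> + \<bar>m\<bar>)
               in wp * E x * fp + wm * E x * fm)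
            else 0)
       | ChoiceC \<Rightarrow>
           (if (\<forall>y\<in>I. E y > 0) then E x * fp
            else if (\<forall>y\<in>I. E y < 0) then E x * fm
            else if (\<exists>y\<in>I. E y = 0) \<and> P \<ge> 0 then P * fp
            else if (\<exists>y\<in>I. E y = 0) \<and> P < 0 then P * fm
            else 0)))"

(* B_ij(E_h; f_h, phi_h); c = f_h(t), ct = d f_h/dt (t), ph = phi_h, E = E_h^i *)
definition Bij :: "eflux_choice \<Rightarrow> nat \<Rightarrow> nat \<Rightarrow> nat \<Rightarrow> (nat \<Rightarrow> real) \<Rightarrow> (nat \<Rightarrow> real)
      \<Rightarrow> (real \<Rightarrow> real) \<Rightarrow> coef \<Rightarrow> coef \<Rightarrow> coef \<Rightarrow> nat \<Rightarrow> nat \<Rightarrow> real" where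
  "Bij ch k Nx Nv xs vs E c ct ph i j =
      integral (cell xs vs i j) (\<lambda>(x, v). cellpoly k ct i j x v * cellpoly k ph i j x v)
    - integral (cell xs vs i j) (\<lambda>(x, v). v * cellpoly k c i j x v * deriv (\<lambda>y. cellpoly k ph i j y v) x)
    + integral (cell xs vs i j) (\<lambda>(x, v). E x * cellpoly k c i j x v * deriv (\<lambda>w. cellpoly k ph i j x w) v)
    + integral {vs (j - 1)..vs j} (\<lambda>v.
          vflux k Nx xs c i j v * cellpoly k ph i j (xs i) v
        - vflux k Nx xs c (i - 1) j v * cellpoly k ph i j (xs (i - 1)) v)
    - integral {xs (i - 1)..xs i} (\<lambda>x.
          Eflux ch k Nv xs vs E c i j x * cellpoly k ph i j x (vs j)
        - Eflux ch k Nv xs vs E c i (j - 1) x * cellpoly k ph i j x (vs (j - 1)))"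

end

theory Submission
  imports Defs
begin

text \<open>Test the scheme with the constant function 1. Its derivatives vanish, so only the
  time-derivative term and the fluxes remain; in each row of cells the x-fluxes telescope
  (the two end fluxes agree by periodicity) and in each column the v-fluxes telescope to
  the vanishing boundary fluxes. Hence the total mass has derivative zero. At t = 0 the
  orthogonality defining the L2 projection, tested with 1, says that the projection
  preserves the mass of every cell, and the cell integrals of f0 add up to its integral
  over the whole domain. Only the single-valuedness of the fluxes on each edge matters,
  so the argument is the same for all three choices of the E-flux.\<close>

lemma square_integrable_imp_integrable:
  fixes f :: "'a::euclidean_space \<Rightarrow> real"
  assumes "f measurable_on cbox a b" and "(\<lambda>z. (f z)\<^sup>2) integrable_on cbox a b"
  shows "f integrable_on cbox a b"
proof (rule measurable_bounded_by_integrable_imp_integrable[where g = "\<lambda>z. (f z)\<^sup>2 + 1"])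
  show "f \<in> borel_measurable (lebesgue_on (cbox a b))"
    using assms(1) by (rule measurable_on_imp_borel_measurable_lebesgue) simp
  show "(\<lambda>z. (f z)\<^sup>2 + 1) integrable_on cbox a b"
    using assms(2) by (intro integrable_add) auto
  show "norm (f z) \<le> (f z)\<^sup>2 + 1" for z
    using sum_squares_bound[of "\<bar>f z\<bar>" 1] by (simp add: power2_eq_square)
qed simp

lemma integral_cbox_split_snd:
  fixes f :: "real \<times> real \<Rightarrow> 'b::banach"
  assumes "f integrable_on cbox (a, c) (b, d)" and "c \<le> m" "m \<le> d"
  shows "integral (cbox (a, c) (b, d)) f
       = integral (cbox (a, c) (b, m)) f + integral (cbox (a, m) (b, d)) f"
proof -
  have "cbox (a, c) (b, d) \<inter> {z. z \<bullet> (0, 1) \<le> m} = cbox (a, c) (b, m)"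
       "cbox (a, c) (b, d) \<inter> {z. z \<bullet> (0, 1) \<ge> m} = cbox (a, m) (b, d)"
    using assms by (auto simp: cbox_Pair_eq inner_prod_def)
  then show ?thesis
    using integral_split[OF assms(1), of "(0, 1)" m] by (simp add: Basis_prod_def)
qed

lemma integral_cbox_split_fst:
  fixes f :: "real \<times> real \<Rightarrow> 'b::banach"
  assumes "f integrable_on cbox (a, c) (b, d)" and "a \<le> m" "m \<le> b"
  shows "integral (cbox (a, c) (b, d)) f
       = integral (cbox (a, c) (m, d)) f + integral (cbox (m, c) (b, d)) f"
proof -
  have "cbox (a, c) (b, d) \<inter> {z. z \<bullet> (1, 0) \<le> m} = cbox (a, c) (m, d)"
       "cbox (a, c) (b, d) \<inter> {z. z \<bullet> (1, 0) \<ge> m} = cbox (m, c) (b, d)"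
    using assms by (auto simp: cbox_Pair_eq inner_prod_def)
  then show ?thesis
    using integral_split[OF assms(1), of "(1, 0)" m] by (simp add: Basis_prod_def)
qed

lemma integral_cbox_grid_snd:
  fixes f :: "real \<times> real \<Rightarrow> 'b::banach"
  assumes "\<And>j. j < N \<Longrightarrow> vs j \<le> vs (Suc j)"
    and "f integrable_on cbox (a, vs 0) (b, vs N)"
  shows "integral (cbox (a, vs 0) (b, vs N)) f
       = (\<Sum>j=1..N. integral (cbox (a, vs (j - 1)) (b, vs j)) f)"
  using assms
proof (induction N)
  case 0
  show ?case
    using integral_null[of "(a, vs 0)" "(b, vs 0)" f] by (simp add: content_Pair)
next
  case (Suc N)
  have lo: "vs 0 \<le> vs N"
    by (rule lift_Suc_mono_le_ivl[of "{..<N}"]) (use Suc.prems(1) in auto)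
  have hi: "vs N \<le> vs (Suc N)"
    using Suc.prems(1) by simp
  from lo hi have sub: "cbox (a, vs 0) (b, vs N) \<subseteq> cbox (a, vs 0) (b, vs (Suc N))"
    by (auto simp: cbox_Pair_eq)
  have "integral (cbox (a, vs 0) (b, vs N)) f = (\<Sum>j=1..N. integral (cbox (a, vs (j - 1)) (b, vs j)) f)"
    using Suc.prems(1) integrable_on_subcbox[OF Suc.prems(2) sub] by (intro Suc.IH) auto
  then show ?case
    using integral_cbox_split_snd[OF Suc.prems(2) lo hi] by simp
qed

lemma integral_cbox_grid_fst:
  fixes f :: "real \<times> real \<Rightarrow> 'b::banach"
  assumes "\<And>i. i < N \<Longrightarrow> xs i \<le> xs (Suc i)"
    and "f integrable_on cbox (xs 0, c) (xs N, d)"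
  shows "integral (cbox (xs 0, c) (xs N, d)) f
       = (\<Sum>i=1..N. integral (cbox (xs (i - 1), c) (xs i, d)) f)"
  using assms
proof (induction N)
  case 0
  show ?case
    using integral_null[of "(xs 0, c)" "(xs 0, d)" f] by (simp add: content_Pair)
next
  case (Suc N)
  have lo: "xs 0 \<le> xs N"
    by (rule lift_Suc_mono_le_ivl[of "{..<N}"]) (use Suc.prems(1) in auto)
  have hi: "xs N \<le> xs (Suc N)"
    using Suc.prems(1) by simp
  from lo hi have sub: "cbox (xs 0, c) (xs N, d) \<subseteq> cbox (xs 0, c) (xs (Suc N), d)"
    by (auto simp: cbox_Pair_eq)
  have "integral (cbox (xs 0, c) (xs N, d)) f = (\<Sum>i=1..N. integral (cbox (xs (i - 1), c) (xs i, d)) f)"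
    using Suc.prems(1) integrable_on_subcbox[OF Suc.prems(2) sub] by (intro Suc.IH) auto
  then show ?case
    using integral_cbox_split_fst[OF Suc.prems(2) lo hi] by simp
qed

lemma grid_le:
  fixes xs :: "nat \<Rightarrow> 'a::order"
  assumes "\<And>i. i < N \<Longrightarrow> xs i \<le> xs (Suc i)" and "m \<le> n" "n \<le> N"
  shows "xs m \<le> xs n"
  by (rule lift_Suc_mono_le_ivl[of "{..<N}"]) (use assms in auto)

lemma cell_subset_domain:
  assumes "\<And>i. i < Nx \<Longrightarrow> xs i \<le> xs (Suc i)" "\<And>j. j < Nv \<Longrightarrow> vs j \<le> vs (Suc j)"
    and "i \<in> {1..Nx}" "j \<in> {1..Nv}"
  shows "cell xs vs i j \<subseteq> cbox (xs 0, vs 0) (xs Nx, vs Nv)"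
proof -
  have "xs 0 \<le> xs (i - 1)" "xs i \<le> xs Nx"
    using assms(3) by (auto intro: grid_le[where xs = xs and N = Nx, OF assms(1)])
  moreover have "vs 0 \<le> vs (j - 1)" "vs j \<le> vs Nv"
    using assms(4) by (auto intro: grid_le[where xs = vs and N = Nv, OF assms(2)])
  ultimately show ?thesis
    by (auto simp: cell_def cbox_Pair_eq)
qed

lemma sum_integral_cells:
  fixes f :: "real \<times> real \<Rightarrow> 'b::banach"
  assumes "\<And>i. i < Nx \<Longrightarrow> xs i \<le> xs (Suc i)" "\<And>j. j < Nv \<Longrightarrow> vs j \<le> vs (Suc j)"
    and f: "f integrable_on cbox (xs 0, vs 0) (xs Nx, vs Nv)"
  shows "(\<Sum>i=1..Nx. \<Sum>j=1..Nv. integral (cell xs vs i j) f)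
       = integral (cbox (xs 0, vs 0) (xs Nx, vs Nv)) f"
proof -
  have "(\<Sum>j=1..Nv. integral (cell xs vs i j) f) = integral (cbox (xs (i - 1), vs 0) (xs i, vs Nv)) f"
    if "i \<in> {1..Nx}" for i
  proof -
    have "xs 0 \<le> xs (i - 1)" "xs i \<le> xs Nx"
      using that by (auto intro: grid_le[where xs = xs and N = Nx, OF assms(1)])
    then have "cbox (xs (i - 1), vs 0) (xs i, vs Nv) \<subseteq> cbox (xs 0, vs 0) (xs Nx, vs Nv)"
      by (auto simp: cbox_Pair_eq)
    then show ?thesis
      using integral_cbox_grid_snd[where vs = vs and N = Nv, OF assms(2) integrable_on_subcbox[OF f]]
      by (simp add: cell_def)
  qed
  then show ?thesis
    using integral_cbox_grid_fst[where xs = xs and N = Nx, OF assms(1) f] by simp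
qed

definition one_coef :: coef where
  "one_coef = (\<lambda>i j a b. if a = 0 \<and> b = 0 then 1 else 0)"

lemma cellpoly_one_coef [simp]: "cellpoly k one_coef i j x v = 1"
proof -
  have "(\<Sum>b\<le>k. one_coef i j a b * x ^ a * v ^ b) = (if a = 0 then 1 else 0)" for a
    by (cases "a = 0") (simp_all add: one_coef_def mult_delta_left)
  then show ?thesis
    by (simp add: cellpoly_def)
qed

lemma integral_cellpoly:
  "integral (cbox p q) (\<lambda>(x, v). cellpoly k c i j x v)
   = (\<Sum>a\<le>k. \<Sum>b\<le>k. c i j a b * integral (cbox p q) (\<lambda>z. fst z ^ a * snd z ^ b))"
proof -
  have "integral (cbox p q) (\<lambda>(x, v). cellpoly k c i j x v)
      = integral (cbox p q) (\<lambda>z. \<Sum>a\<le>k. \<Sum>b\<le>k. c i j a b * (fst z ^ a * snd z ^ b))"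
    by (simp add: cellpoly_def split_def mult.assoc)
  also have "\<dots>
      = (\<Sum>a\<le>k. integral (cbox p q) (\<lambda>z. \<Sum>b\<le>k. c i j a b * (fst z ^ a * snd z ^ b)))"
    by (rule integral_sum) (auto intro!: integrable_continuous continuous_intros)
  also have "\<dots> = (\<Sum>a\<le>k. \<Sum>b\<le>k. c i j a b * integral (cbox p q) (\<lambda>z. fst z ^ a * snd z ^ b))"
    by (subst integral_sum) (auto intro!: integrable_continuous continuous_intros)
  finally show ?thesis .
qed

lemma mass_has_real_derivative:
  assumes "\<And>i j a b. \<lbrakk>i \<in> {1..Nx}; j \<in> {1..Nv}; a \<le> k; b \<le> k\<rbrakk> \<Longrightarrow>
      ((\<lambda>s. c s i j a b) has_real_derivative c' i j a b) (at t within T)"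
  shows "((\<lambda>s. mass Nx Nv xs vs k (c s)) has_real_derivative mass Nx Nv xs vs k c') (at t within T)"
  unfolding mass_def cell_def integral_cellpoly
  by (intro DERIV_sum DERIV_cmult_right assms) auto

lemma continuous_on_eq_poly:
  fixes p :: "'a::real_normed_field poly"
  assumes "\<forall>x\<in>S. f x = poly p x"
  shows "continuous_on S f"
proof -
  have "continuous_on S (poly p)"
    by (intro continuous_intros)
  then show ?thesis
    by (rule continuous_on_eq) (simp add: assms)
qed

lemma vflux_continuous_on: "continuous_on S (vflux k Nx xs c e j)"
  unfolding vflux_def Let_def cellpoly_def by (intro continuous_intros) auto

lemma continuous_on_if_const:
  "continuous_on S f \<Longrightarrow> continuous_on S g \<Longrightarrow> continuous_on S (\<lambda>x. if P then f x else g x)"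
  by (cases P) auto

lemma Eflux_continuous_on:
  assumes "continuous_on S E"
  shows "continuous_on S (Eflux ch k Nv xs vs E c i j)"
  unfolding Eflux_def Let_def cellpoly_def
  by (cases ch; simp only: eflux_choice.case; intro continuous_on_if_const continuous_intros assms)

lemma Bij_one_coef:
  assumes "continuous_on {xs (i - 1)..xs i} E"
  shows "Bij ch k Nx Nv xs vs E c ct one_coef i j
       = integral (cell xs vs i j) (\<lambda>(x, v). cellpoly k ct i j x v)
       + (integral {vs (j - 1)..vs j} (vflux k Nx xs c i j)
          - integral {vs (j - 1)..vs j} (vflux k Nx xs c (i - 1) j))
       - (integral {xs (i - 1)..xs i} (Eflux ch k Nv xs vs E c i j)
          - integral {xs (i - 1)..xs i} (Eflux ch k Nv xs vs E c i (j - 1)))"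
proof -
  have "integral {vs (j - 1)..vs j} (\<lambda>v. vflux k Nx xs c i j v - vflux k Nx xs c (i - 1) j v)
      = integral {vs (j - 1)..vs j} (vflux k Nx xs c i j)
        - integral {vs (j - 1)..vs j} (vflux k Nx xs c (i - 1) j)"
    by (intro integral_diff integrable_continuous_interval vflux_continuous_on)
  moreover have "integral {xs (i - 1)..xs i}
        (\<lambda>x. Eflux ch k Nv xs vs E c i j x - Eflux ch k Nv xs vs E c i (j - 1) x)
      = integral {xs (i - 1)..xs i} (Eflux ch k Nv xs vs E c i j)
        - integral {xs (i - 1)..xs i} (Eflux ch k Nv xs vs E c i (j - 1))"
    by (intro integral_diff integrable_continuous_interval Eflux_continuous_on assms)
  ultimately show ?thesis
    by (simp add: Bij_def)
qed

lemma sum_diff_pred_telescope: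
  fixes g :: "nat \<Rightarrow> 'a::ab_group_add"
  shows "(\<Sum>i=1..n. g i - g (i - 1)) = g n - g 0"
  by (induction n) simp_all

lemma vflux_periodic: "vflux k Nx xs c 0 j = vflux k Nx xs c Nx j"
  by (simp add: vflux_def fun_eq_iff)

lemma Eflux_boundary:
  "Eflux ch k Nv xs vs E c i 0 = (\<lambda>_. 0)" "Eflux ch k Nv xs vs E c i Nv = (\<lambda>_. 0)"
  by (simp_all add: Eflux_def fun_eq_iff)

lemma sum_Bij_one_coef:
  assumes "\<And>i. i \<in> {1..Nx} \<Longrightarrow> continuous_on {xs (i - 1)..xs i} (E i)"
  shows "(\<Sum>i=1..Nx. \<Sum>j=1..Nv. Bij ch k Nx Nv xs vs (E i) c ct one_coef i j)
       = mass Nx Nv xs vs k ct"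
proof -
  define G where "G j e = integral {vs (j - 1)..vs j} (vflux k Nx xs c e j)" for j e
  define H where "H i j = integral {xs (i - 1)..xs i} (Eflux ch k Nv xs vs (E i) c i j)" for i j
  have "(\<Sum>i=1..Nx. \<Sum>j=1..Nv. Bij ch k Nx Nv xs vs (E i) c ct one_coef i j)
      = (\<Sum>i=1..Nx. \<Sum>j=1..Nv. integral (cell xs vs i j) (\<lambda>(x, v). cellpoly k ct i j x v)
          + (G j i - G j (i - 1)) - (H i j - H i (j - 1)))"
  proof (intro sum.cong refl)
    fix i j
    assume "i \<in> {1..Nx}"
    from Bij_one_coef[OF assms[OF this]] show "Bij ch k Nx Nv xs vs (E i) c ct one_coef i j
        = integral (cell xs vs i j) (\<lambda>(x, v). cellpoly k ct i j x v)
          + (G j i - G j (i - 1)) - (H i j - H i (j - 1))"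
      by (simp add: G_def H_def)
  qed
  also have "\<dots> = mass Nx Nv xs vs k ct
      + (\<Sum>j=1..Nv. \<Sum>i=1..Nx. G j i - G j (i - 1)) - (\<Sum>i=1..Nx. \<Sum>j=1..Nv. H i j - H i (j - 1))"
    by (simp only: mass_def sum.distrib sum_subtractf sum.swap[of _ "{1..Nx}"])
  also have "(\<Sum>j=1..Nv. \<Sum>i=1..Nx. G j i - G j (i - 1)) = 0"
  proof -
    have "(\<Sum>i=1..Nx. G j i - G j (i - 1)) = G j Nx - G j 0" for j
      by (rule sum_diff_pred_telescope)
    moreover have "G j Nx = G j 0" for j
      by (simp add: G_def vflux_periodic)
    ultimately show ?thesis
      by simp
  qed
  also have "(\<Sum>i=1..Nx. \<Sum>j=1..Nv. H i j - H i (j - 1)) = 0"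
  proof -
    have "(\<Sum>j=1..Nv. H i j - H i (j - 1)) = H i Nv - H i 0" for i
      by (rule sum_diff_pred_telescope)
    moreover have "H i Nv = 0" "H i 0 = 0" for i
      by (simp_all add: H_def Eflux_boundary)
    ultimately show ?thesis
      by simp
  qed
  finally show ?thesis
    by simp
qed

lemma cellpoly_integrable_on: "(\<lambda>(x, v). cellpoly k c i j x v) integrable_on cbox p q"
  unfolding cellpoly_def split_def by (intro integrable_continuous continuous_intros)

lemma mass_L2_proj:
  assumes "is_L2_proj Nx Nv xs vs k g p"
    and "\<And>i j. \<lbrakk>i \<in> {1..Nx}; j \<in> {1..Nv}\<rbrakk> \<Longrightarrow> g integrable_on cell xs vs i j"
  shows "mass Nx Nv xs vs k p = (\<Sum>i=1..Nx. \<Sum>j=1..Nv. integral (cell xs vs i j) g)"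
proof -
  have "0 = (\<Sum>i=1..Nx. \<Sum>j=1..Nv. integral (cell xs vs i j)
        (\<lambda>(x, v). (g (x, v) - cellpoly k p i j x v) * cellpoly k one_coef i j x v))"
    using assms(1) unfolding is_L2_proj_def by metis
  also have "\<dots> = (\<Sum>i=1..Nx. \<Sum>j=1..Nv. integral (cell xs vs i j) g
      - integral (cell xs vs i j) (\<lambda>(x, v). cellpoly k p i j x v))"
  proof (intro sum.cong refl)
    fix i j
    assume "i \<in> {1..Nx}" "j \<in> {1..Nv}"
    then have "integral (cell xs vs i j) (\<lambda>z. g z - (\<lambda>(x, v). cellpoly k p i j x v) z)
        = integral (cell xs vs i j) g - integral (cell xs vs i j) (\<lambda>(x, v). cellpoly k p i j x v)"
      by (intro integral_diff assms(2)) (simp_all add: cell_def cellpoly_integrable_on)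
    then show "integral (cell xs vs i j)
          (\<lambda>(x, v). (g (x, v) - cellpoly k p i j x v) * cellpoly k one_coef i j x v)
        = integral (cell xs vs i j) g - integral (cell xs vs i j) (\<lambda>(x, v). cellpoly k p i j x v)"
      by (simp add: split_def)
  qed
  finally show ?thesis
    by (simp add: mass_def sum_subtractf)
qed

lemma mass_conservation:
  assumes E: "\<And>t i. \<lbrakk>t \<in> {0..T}; i \<in> {1..Nx}\<rbrakk> \<Longrightarrow> continuous_on {xs (i - 1)..xs i} (E t i)"
    and c': "\<And>t i j a b. \<lbrakk>t \<in> {0..T}; i \<in> {1..Nx}; j \<in> {1..Nv}; a \<le> k; b \<le> k\<rbrakk> \<Longrightarrow>
      ((\<lambda>s. c s i j a b) has_real_derivative c' t i j a b) (at t within {0..T})"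
    and scheme: "\<And>t. t \<in> {0..T} \<Longrightarrow>
      (\<Sum>i=1..Nx. \<Sum>j=1..Nv. Bij ch k Nx Nv xs vs (E t i) (c t) (c' t) one_coef i j) = 0"
    and t: "t \<in> {0..T}"
  shows "mass Nx Nv xs vs k (c t) = mass Nx Nv xs vs k (c 0)"
proof -
  have "\<exists>C. \<forall>s\<in>{0..T}. mass Nx Nv xs vs k (c s) = C"
  proof (rule has_field_derivative_zero_constant)
    fix s
    assume s: "s \<in> {0..T}"
    have "((\<lambda>s. mass Nx Nv xs vs k (c s)) has_real_derivative mass Nx Nv xs vs k (c' s))
        (at s within {0..T})"
      by (rule mass_has_real_derivative) (rule c'[OF s])
    moreover have "mass Nx Nv xs vs k (c' s) = 0"
      using sum_Bij_one_coef[where E = "E s" and Nx = Nx, OF E[OF s]] scheme[OF s] by simp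
    ultimately show "((\<lambda>s. mass Nx Nv xs vs k (c s)) has_real_derivative 0) (at s within {0..T})"
      by simp
  qed simp
  then show ?thesis
    using t by force
qed

theorem lemma3p1:
  fixes k Nx Nv :: nat and xs vs :: "nat \<Rightarrow> real" and L tf :: real
    and f0 :: "real \<times> real \<Rightarrow> real"
    and Eh :: "real \<Rightarrow> nat \<Rightarrow> real \<Rightarrow> real"
    and fh fh' :: "real \<Rightarrow> coef"
    and ch :: eflux_choice
  assumes Nx: "Nx \<ge> 1" and Nv: "Nv \<ge> 1"
    and xs0: "xs 0 = 0" and xsN: "xs Nx = 1" and xs_mono: "\<forall>i<Nx. xs i < xs (Suc i)"
    and vs0: "vs 0 = - L" and vsN: "vs Nv = L" and vs_mono: "\<forall>j<Nv. vs j < vs (Suc j)"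
    and v_node: "\<exists>m\<le>Nv. vs m = 0"
    and tf: "tf > 0"
    and f0_supp: "\<forall>z. z \<notin> cbox (0, - L) (1, L) \<longrightarrow> f0 z = 0"
    and f0_L2: "f0 measurable_on cbox (0, - L) (1, L)"
               "(\<lambda>z. (f0 z)\<^sup>2) integrable_on cbox (0, - L) (1, L)"
    and f0_norm: "integral (cbox (0, - L) (1, L)) f0 = 1"
    and Eh_pp: "\<forall>t. \<forall>i\<in>{1..Nx}. \<exists>p. \<forall>x\<in>{xs (i - 1)..xs i}. Eh t i x = poly p x"
    and fh_C1: "\<forall>i\<in>{1..Nx}. \<forall>j\<in>{1..Nv}. \<forall>a\<le>k. \<forall>b\<le>k.
        (\<forall>t\<in>{0..tf}. ((\<lambda>s. fh s i j a b) has_real_derivative fh' t i j a b) (at t within {0..tf}))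
        \<and> continuous_on {0..tf} (\<lambda>t. fh' t i j a b)"
    and fh_init: "is_L2_proj Nx Nv xs vs k f0 (fh 0)"
    and scheme: "\<forall>t\<in>{0..tf}. \<forall>\<phi>::coef.
        (\<Sum>i=1..Nx. \<Sum>j=1..Nv. Bij ch k Nx Nv xs vs (Eh t i) (fh t) (fh' t) \<phi> i j) = 0"
  shows "\<forall>t\<in>{0..tf}.
           mass Nx Nv xs vs k (fh t) = mass Nx Nv xs vs k (fh 0)
         \<and> mass Nx Nv xs vs k (fh 0) = (\<Sum>i=1..Nx. \<Sum>j=1..Nv. integral (cell xs vs i j) f0)
         \<and> (\<Sum>i=1..Nx. \<Sum>j=1..Nv. integral (cell xs vs i j) f0) = 1"
proof -
  have xs_le: "\<And>i. i < Nx \<Longrightarrow> xs i \<le> xs (Suc i)" and vs_le: "\<And>j. j < Nv \<Longrightarrow> vs j \<le> vs (Suc j)"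
    using xs_mono vs_mono by (simp_all add: less_imp_le)
  have domain: "cbox (0, - L) (1, L) = cbox (xs 0, vs 0) (xs Nx, vs Nv)"
    by (simp add: xs0 xsN vs0 vsN)
  have f0_int: "f0 integrable_on cbox (xs 0, vs 0) (xs Nx, vs Nv)"
    using square_integrable_imp_integrable[OF f0_L2] by (simp add: domain)
  have conserved: "mass Nx Nv xs vs k (fh t) = mass Nx Nv xs vs k (fh 0)" if "t \<in> {0..tf}" for t
  proof (rule mass_conservation[where E = Eh and c' = fh'])
    show "continuous_on {xs (i - 1)..xs i} (Eh s i)" if "i \<in> {1..Nx}" for s i
      using Eh_pp that by (meson continuous_on_eq_poly)
  qed (use fh_C1 scheme that in auto)
  have f0_cell_int: "f0 integrable_on cell xs vs i j" if "i \<in> {1..Nx}" "j \<in> {1..Nv}" for i j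
    using cell_subset_domain[where xs = xs and vs = vs, OF xs_le vs_le that]
    unfolding cell_def by (rule integrable_on_subcbox[OF f0_int])
  have initial: "mass Nx Nv xs vs k (fh 0) = (\<Sum>i=1..Nx. \<Sum>j=1..Nv. integral (cell xs vs i j) f0)"
    using fh_init f0_cell_int by (rule mass_L2_proj)
  have total: "(\<Sum>i=1..Nx. \<Sum>j=1..Nv. integral (cell xs vs i j) f0) = 1"
    using sum_integral_cells[where xs = xs and vs = vs, OF xs_le vs_le f0_int] f0_norm
    by (simp add: domain)
  show ?thesis
    using conserved initial total by simp
qed

end
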